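(* For any real $x>1/4$ we have $$\sum_{k=0}^\infty\frac{2(4x+1)k-2x+1}{x^{2k}\binom{4k}{2k}}=\frac{8x^2}{(4x-1)^2}\left(\frac3{\sqrt{4x-1}}\operatorname{arccot}\sqrt{4x-1}-4x+4\right)$$ and $$\sum_{k=0}^\infty\frac{2(4x-1)k-2x-1}{x^{2k}\binom{4k}{2k}}=\frac{8x^2}{(4x+1)^2}\left(\frac{3R(4x+1)}{4x+1}-4x-4\right).$$ Consequently, \begin{align*} \sum_{k=0}^\infty\frac{10k-1}{\binom{4k}{2k}}&=\frac{4\sqrt3}{27}\pi,\\ \sum_{k=0}^\infty\frac{k4^k}{\binom{4k}{2k}}&=\frac{3\pi+8}{12},\\ \sum_{k=0}^\infty\frac{(14k+1)9^k}{\binom{4k}{2k}}&=24\pi\sqrt3+64,\\ \sum_{k=0}^\infty\frac{(22k-1)9^k}{4^k\binom{4k}{2k}}&=\frac{32}{25}\left(4+\frac{27}{\sqrt{15}}\arctan\sqrt{\frac35}\right),\\ \sum_{k=0}^\infty\frac{14k-5}{4^k\binom{4k}{2k}}&=\frac{16}{81}(\log2-24). \end{align*}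
   Context: For real $x$ with $x>1$ or $x<0$, define $R(x)=\sqrt x\,\operatorname{arctanh}\frac1{\sqrt x}$, i.e. $R(x)=\frac{\sqrt x}2\log\frac{\sqrt x+1}{\sqrt x-1}$ if $x>1$ and $R(x)=\sqrt{|x|}\arctan\frac1{\sqrt{|x|}}$ if $x<0$. For $y>0$, $\operatorname{arccot} y=\arctan(1/y)\in(0,\pi/2)$. *)

theory Defs
  imports Complex_Main
begin

text \<open>R(x) = sqrt x * arctanh (1/sqrt x), for x > 1 or x < 0.\<close>
definition R :: "real \<Rightarrow> real" where
  "R x = (if x > 1 then sqrt x / 2 * ln ((sqrt x + 1) / (sqrt x - 1))
          else sqrt \<bar>x\<bar> * arctan (1 / sqrt \<bar>x\<bar>))"

definition arccot :: "real \<Rightarrow> real" where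
  "arccot y = arctan (1 / y)"

end

theory Submission
  imports Defs "HOL-Real_Asymp.Real_Asymp"
begin

(* Let F(w) = sum_n w^n / C(2n,n), which converges for |w| < 4. The recurrence
   (n+1) C(2n+2,n+1) = 2(2n+1) C(2n,n) turns into the differential equation
   w (4 - w) F'(w) = (w + 2) F(w) - 2, whose solution with F(0) = 1 is
     F(t^2)  = 4/(4 - t^2) + 4 t arcsin(t/2) / (4 - t^2)^(3/2),
     F(-t^2) = 4/(4 + t^2) - 4 t arsinh(t/2) / (4 + t^2)^(3/2).
   The series of the theorem are the even parts at w = 1/x of
   sum_n (c n + d) w^n / C(2n,n) = c w F'(w) + d F(w). Eliminating F' by the differential
   equation, the weights (c, d) = (4x + 1, 1 - 2x), resp. (4x - 1, -2x - 1), make the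
   term with F(-1/x), resp. F(1/x), vanish, and the closed form of the other value
   remains. *)

lemma central_binomial_Suc:
  "Suc n * ((2 * Suc n) choose Suc n) = 2 * (2 * n + 1) * ((2 * n) choose n)"
proof -
  have double_Suc: "2 * Suc n = Suc (Suc (2 * n))" by simp
  have "Suc n * ((2 * Suc n) choose Suc n) = 2 * Suc n * (Suc (2 * n) choose n)"
    unfolding double_Suc by (rule Suc_times_binomial)
  also have "\<dots> = 2 * (Suc n * (Suc (2 * n) choose Suc n))"
    using binomial_symmetric[of n "Suc (2 * n)"] by simp
  also have "Suc n * (Suc (2 * n) choose Suc n) = Suc (2 * n) * ((2 * n) choose n)"
    by (rule Suc_times_binomial)
  finally show ?thesis by simp
qed

definition inv_cbinom :: "nat \<Rightarrow> real" where
  "inv_cbinom n = 1 / real ((2 * n) choose n)"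

lemma inv_cbinom_Suc:
  "2 * (2 * real n + 1) * inv_cbinom (Suc n) = real (Suc n) * inv_cbinom n"
proof -
  have "real (Suc n) * real ((2 * Suc n) choose Suc n) = 2 * (2 * real n + 1) * real ((2 * n) choose n)"
    using arg_cong[OF central_binomial_Suc[of n], of real] by (simp add: algebra_simps del: binomial_Suc_Suc)
  then show ?thesis unfolding inv_cbinom_def
    by (simp add: field_simps del: binomial_Suc_Suc of_nat_Suc)
qed

lemma summable_inv_cbinom:
  assumes w: "\<bar>w\<bar> < 4"
  shows "summable (\<lambda>n. inv_cbinom n * w ^ n)"
proof -
  define c where "c = (\<bar>w\<bar> + 4) / 8"
  have "c < 1" "\<bar>w\<bar> * (1 / 4) < c" using w by (simp_all add: c_def)
  have "(\<lambda>n. real (Suc n) / (2 * (2 * real n + 1))) \<longlonglongrightarrow> 1 / 4"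
    by real_asymp
  then have "(\<lambda>n. \<bar>w\<bar> * (real (Suc n) / (2 * (2 * real n + 1)))) \<longlonglongrightarrow> \<bar>w\<bar> * (1 / 4)"
    by (rule tendsto_mult_left)
  from order_tendstoD(2)[OF this \<open>\<bar>w\<bar> * (1 / 4) < c\<close>]
  obtain N where N: "\<And>n. n \<ge> N \<Longrightarrow> \<bar>w\<bar> * (real (Suc n) / (2 * (2 * real n + 1))) < c"
    unfolding eventually_sequentially by blast
  show ?thesis
  proof (rule summable_ratio_test[OF \<open>c < 1\<close>, of N])
    fix n assume "N \<le> n"
    have "inv_cbinom (Suc n) = real (Suc n) / (2 * (2 * real n + 1)) * inv_cbinom n"
      using inv_cbinom_Suc[of n] by (simp add: field_simps del: of_nat_Suc)
    then have "norm (inv_cbinom (Suc n) * w ^ Suc n)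
        = \<bar>w\<bar> * (real (Suc n) / (2 * (2 * real n + 1))) * norm (inv_cbinom n * w ^ n)"
      using inv_cbinom_def[of n] by (simp add: abs_mult power_abs mult_ac)
    also have "\<dots> \<le> c * norm (inv_cbinom n * w ^ n)"
      using N[OF \<open>N \<le> n\<close>] by (intro mult_right_mono) auto
    finally show "norm (inv_cbinom (Suc n) * w ^ Suc n) \<le> c * norm (inv_cbinom n * w ^ n)" .
  qed
qed

definition inv_cbinom_series :: "real \<Rightarrow> real" where
  "inv_cbinom_series w = (\<Sum>n. inv_cbinom n * w ^ n)"

definition inv_cbinom_series' :: "real \<Rightarrow> real" where
  "inv_cbinom_series' w = (\<Sum>n. diffs inv_cbinom n * w ^ n)"

lemma inv_cbinom_series_0: "inv_cbinom_series 0 = 1"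
  using powser_zero[of inv_cbinom] by (simp add: inv_cbinom_series_def inv_cbinom_def)

lemma sums_inv_cbinom_series:
  "\<bar>w\<bar> < 4 \<Longrightarrow> (\<lambda>n. inv_cbinom n * w ^ n) sums inv_cbinom_series w"
  unfolding inv_cbinom_series_def by (simp add: summable_inv_cbinom summable_sums)

lemma inv_cbinom_series_has_real_derivative:
  "\<bar>w\<bar> < 4 \<Longrightarrow> (inv_cbinom_series has_real_derivative inv_cbinom_series' w) (at w)"
  unfolding inv_cbinom_series_def[abs_def] inv_cbinom_series'_def
  by (rule termdiffs_strong'[where K = 4]) (auto intro: summable_inv_cbinom)

lemma sums_of_nat_times_inv_cbinom:
  assumes "\<bar>w\<bar> < 4"
  shows "(\<lambda>n. real n * inv_cbinom n * w ^ n) sums (w * inv_cbinom_series' w)"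
proof -
  have "(\<lambda>n. diffs inv_cbinom n * w ^ n) sums inv_cbinom_series' w"
    unfolding inv_cbinom_series'_def
    using termdiff_converges[of w 4 inv_cbinom] summable_inv_cbinom assms
    by (simp add: summable_sums)
  from sums_mult[OF this, of w]
  have "(\<lambda>n. real (Suc n) * inv_cbinom (Suc n) * w ^ Suc n) sums (w * inv_cbinom_series' w)"
    by (simp add: diffs_def mult_ac)
  then show ?thesis
    using sums_Suc_iff[of "\<lambda>n. real n * inv_cbinom n * w ^ n"] by simp
qed

lemma inv_cbinom_series_ode:
  assumes w: "\<bar>w\<bar> < 4"
  shows "w * (4 - w) * inv_cbinom_series' w = (w + 2) * inv_cbinom_series w - 2"
proof -
  define F where "F = inv_cbinom_series w"
  define W where "W = w * inv_cbinom_series' w"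
  define f where "f n = inv_cbinom n * w ^ n" for n
  define g where "g n = real n * inv_cbinom n * w ^ n" for n
  have f: "f sums F" and g: "g sums W"
    unfolding f_def g_def F_def W_def
    using sums_inv_cbinom_series sums_of_nat_times_inv_cbinom w by auto
  have "f 0 = 1" "g 0 = 0" unfolding f_def g_def inv_cbinom_def by simp_all
  then have "(\<lambda>n. f (Suc n)) sums (F - 1)" "(\<lambda>n. g (Suc n)) sums W"
    using f g sums_Suc_iff[of f] sums_Suc_iff[of g] by simp_all
  then have "(\<lambda>n. 4 * g (Suc n) - 2 * f (Suc n)) sums (4 * W - 2 * (F - 1))"
    by (intro sums_diff sums_mult)
  moreover have "(\<lambda>n. w * g n + w * f n) sums (w * W + w * F)"
    using f g by (intro sums_add sums_mult)
  moreover have "4 * g (Suc n) - 2 * f (Suc n) = w * g n + w * f n" for n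
  proof -
    have "4 * g (Suc n) - 2 * f (Suc n) = 2 * (2 * real n + 1) * inv_cbinom (Suc n) * w ^ Suc n"
      unfolding f_def g_def by (simp add: algebra_simps)
    also have "\<dots> = real (Suc n) * inv_cbinom n * w ^ Suc n"
      by (simp only: inv_cbinom_Suc)
    finally show ?thesis unfolding f_def g_def by (simp add: algebra_simps)
  qed
  ultimately have "4 * W - 2 * (F - 1) = w * W + w * F"
    using sums_unique2 by force
  then show ?thesis unfolding F_def W_def by (simp add: algebra_simps)
qed

lemma sums_affine_inv_cbinom:
  assumes "\<bar>w\<bar> < 4"
  shows "(\<lambda>n. (c * real n + d) * inv_cbinom n * w ^ n) sums
           (c * ((w + 2) * inv_cbinom_series w - 2) / (4 - w) + d * inv_cbinom_series w)"
proof -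
  have "(\<lambda>n. c * (real n * inv_cbinom n * w ^ n) + d * (inv_cbinom n * w ^ n)) sums
          (c * (w * inv_cbinom_series' w) + d * inv_cbinom_series w)"
    using assms by (intro sums_add sums_mult sums_of_nat_times_inv_cbinom sums_inv_cbinom_series)
  moreover have "w * inv_cbinom_series' w = ((w + 2) * inv_cbinom_series w - 2) / (4 - w)"
    using inv_cbinom_series_ode[OF assms] assms by (simp add: field_simps)
  ultimately show ?thesis by (simp add: algebra_simps)
qed

lemma eq_linear_if_times_deriv_eq:
  fixes N N' :: "real \<Rightarrow> real"
  assumes deriv: "\<And>t. 0 \<le> t \<Longrightarrow> t < b \<Longrightarrow> (N has_real_derivative N' t) (at t)"
    and N0: "N 0 = 0"
    and euler: "\<And>t. 0 < t \<Longrightarrow> t < b \<Longrightarrow> t * N' t = N t"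
    and s: "0 < s" "s < b"
  shows "N s = N' 0 * s"
proof -
  have quotient_const: "N t / t = N s / s" if "t \<in> {0<..<b}" for t
  proof (rule DERIV_isconst3[of 0 b t s "\<lambda>t. N t / t"])
    fix u :: real assume u: "u \<in> {0<..<b}"
    have "((\<lambda>t. N t / t) has_real_derivative (N' u * u - N u * 1) / (u * u)) (at u)"
      using u by (intro DERIV_divide deriv DERIV_ident) auto
    moreover have "N' u * u - N u * 1 = 0" using euler[of u] u by (simp add: mult.commute)
    ultimately show "((\<lambda>t. N t / t) has_real_derivative 0) (at u)" by simp
  qed (use that s in auto)
  have "((\<lambda>t. (N t - N 0) / (t - 0)) \<longlongrightarrow> N' 0) (at 0)"
    using deriv[of 0] s unfolding has_field_derivative_iff by simp
  then have lim: "((\<lambda>t. N t / t) \<longlongrightarrow> N' 0) (at_right 0)"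
    by (simp add: N0 filterlim_at_split)
  have "0 < b" using s by simp
  then have "eventually (\<lambda>t. N t / t = N s / s) (at_right 0)"
    by (rule eventually_at_right_real[THEN eventually_mono]) (rule quotient_const)
  from iffD1[OF tendsto_cong[OF this] lim]
  have "((\<lambda>t. N s / s) \<longlongrightarrow> N' 0) (at_right (0::real))" .
  then have "N s / s = N' 0" by (simp add: tendsto_const_iff)
  then show ?thesis using s by (simp add: field_simps)
qed

lemma abs_mult_sq_less_4:
  fixes e t :: real
  assumes "\<bar>e\<bar> \<le> 1" "0 \<le> t" "t < 2"
  shows "\<bar>e * t\<^sup>2\<bar> < 4"
proof -
  have "\<bar>e * t\<^sup>2\<bar> \<le> t\<^sup>2" using assms(1) by (simp add: abs_mult mult_left_le_one_le)
  also have "t\<^sup>2 < 2\<^sup>2" using assms(2,3) by (intro power_strict_mono) auto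
  finally show ?thesis by simp
qed

lemma inv_cbinom_series_closed_form:
  fixes e :: real and A :: "real \<Rightarrow> real"
  assumes e: "\<bar>e\<bar> \<le> 1" and A0: "A 0 = 0"
    and dA: "\<And>t. 0 \<le> t \<Longrightarrow> t < 2 \<Longrightarrow> (A has_real_derivative e / sqrt (4 - e * t\<^sup>2)) (at t)"
    and s: "0 < s" "s < 2"
  shows "inv_cbinom_series (e * s\<^sup>2) =
           4 / (4 - e * s\<^sup>2) + 4 * s * A s / ((4 - e * s\<^sup>2) * sqrt (4 - e * s\<^sup>2))"
proof -
  let ?F = inv_cbinom_series and ?F' = inv_cbinom_series'
  have small: "\<bar>e * t\<^sup>2\<bar> < 4" "4 - e * t\<^sup>2 > 0" if "0 \<le> t" "t < 2" for t
    using abs_mult_sq_less_4[OF e that] by auto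
  define r where "r t = sqrt (4 - e * t\<^sup>2)" for t
  (* The differential equation of F says exactly t N' = N, so N is linear; as N 0 = N' 0 = 0,
     N vanishes, which is the claim. *)
  define N where "N t = ?F (e * t\<^sup>2) * (4 - e * t\<^sup>2) * r t - 4 * r t - 4 * t * A t" for t
  define N' where "N' t = (?F' (e * t\<^sup>2) * (2 * e * t) * (4 - e * t\<^sup>2) - ?F (e * t\<^sup>2) * (2 * e * t)) * r t
      + ?F (e * t\<^sup>2) * (4 - e * t\<^sup>2) * (- e * t / r t) - 4 * (- e * t / r t)
      - (4 * A t + 4 * t * (e / r t))" for t
  have deriv: "(N has_real_derivative N' t) (at t)" if t: "0 \<le> t" "t < 2" for t
  proof -
    have dF: "((\<lambda>t. ?F (e * t\<^sup>2)) has_real_derivative ?F' (e * t\<^sup>2) * (2 * e * t)) (at t)"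
      using inv_cbinom_series_has_real_derivative[OF small(1)[OF t]]
      by (intro DERIV_chain2[where f = ?F and g = "\<lambda>t. e * t\<^sup>2"]) (auto intro!: derivative_eq_intros)
    have dr: "(r has_real_derivative - e * t / r t) (at t)"
      unfolding r_def[abs_def] using small(2)[OF t]
      by (auto intro!: derivative_eq_intros simp: field_simps)
    show ?thesis
      unfolding N_def[abs_def] N'_def
      using dA[OF t] unfolding r_def[symmetric]
      by (auto intro!: derivative_eq_intros dF dr simp: algebra_simps)
  qed
  have euler: "t * N' t = N t" if t: "0 < t" "t < 2" for t
  proof -
    define w where "w = e * t\<^sup>2"
    have r: "(4 - w) / r t = r t"
      using small(2)[of t] t unfolding r_def w_def by (simp add: real_div_sqrt)
    have "t * N' t = 2 * r t * (w * (4 - w) * ?F' w) - 2 * w * ?F w * r t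
        - w * ?F w * ((4 - w) / r t) - 4 * t * A t"
      unfolding N'_def w_def by (simp add: field_simps power2_eq_square)
    also have "\<dots> = 2 * r t * ((w + 2) * ?F w - 2) - 2 * w * ?F w * r t - w * ?F w * r t - 4 * t * A t"
      unfolding r using inv_cbinom_series_ode small(1)[of t] t unfolding w_def by simp
    also have "\<dots> = N t"
      unfolding N_def w_def by (simp add: algebra_simps)
    finally show ?thesis .
  qed
  have N0: "N 0 = 0" unfolding N_def r_def by (simp add: A0 inv_cbinom_series_0)
  have "N s = N' 0 * s" by (rule eq_linear_if_times_deriv_eq[OF deriv N0 euler s])
  moreover have "N' 0 = 0" unfolding N'_def by (simp add: A0)
  ultimately have "N s = 0" by simp
  then have "?F (e * s\<^sup>2) * ((4 - e * s\<^sup>2) * r s) = 4 * r s + 4 * s * A s"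
    unfolding N_def by (simp add: algebra_simps)
  moreover have "r s > 0" "4 - e * s\<^sup>2 > 0" using small(2)[of s] s unfolding r_def by simp_all
  ultimately have "?F (e * s\<^sup>2) = (4 * r s + 4 * s * A s) / ((4 - e * s\<^sup>2) * r s)"
    by (simp add: eq_divide_eq)
  also have "\<dots> = 4 / (4 - e * s\<^sup>2) + 4 * s * A s / ((4 - e * s\<^sup>2) * r s)"
    using \<open>r s > 0\<close> by (simp add: add_divide_distrib)
  finally show ?thesis unfolding r_def .
qed

lemma sqrt_four_minus_sq: "sqrt (4 - c * t\<^sup>2) = 2 * sqrt (1 - c * (t / 2)\<^sup>2)"
proof -
  have factor: "4 - c * t\<^sup>2 = 2\<^sup>2 * (1 - c * (t / 2)\<^sup>2)"
    by (simp add: power_divide right_diff_distrib)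
  show ?thesis unfolding factor real_sqrt_mult by simp
qed

lemma inv_cbinom_series_sq:
  assumes "0 < s" "s < 2"
  shows "inv_cbinom_series (s\<^sup>2) =
           4 / (4 - s\<^sup>2) + 4 * s * arcsin (s / 2) / ((4 - s\<^sup>2) * sqrt (4 - s\<^sup>2))"
proof -
  have "((\<lambda>t. arcsin (t / 2)) has_real_derivative 1 / sqrt (4 - 1 * t\<^sup>2)) (at t)"
    if "0 \<le> t" "t < 2" for t
    using that sqrt_four_minus_sq[of 1 t]
    by (auto intro!: derivative_eq_intros simp: field_simps)
  from inv_cbinom_series_closed_form[of 1, OF _ _ this assms] show ?thesis by simp
qed

lemma inv_cbinom_series_neg_sq:
  assumes "0 < s" "s < 2"
  shows "inv_cbinom_series (- s\<^sup>2) =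
           4 / (4 + s\<^sup>2) - 4 * s * arsinh (s / 2) / ((4 + s\<^sup>2) * sqrt (4 + s\<^sup>2))"
proof -
  have "((\<lambda>t. - arsinh (t / 2)) has_real_derivative -1 / sqrt (4 - (-1) * t\<^sup>2)) (at t)" for t
  proof -
    have "((\<lambda>t. - arsinh (t / 2)) has_real_derivative - (1 / sqrt ((t / 2)\<^sup>2 + 1) * (1 / 2))) (at t)"
      by (intro DERIV_minus DERIV_chain2[OF arsinh_real_has_field_derivative])
        (auto intro!: derivative_eq_intros)
    then show ?thesis using sqrt_four_minus_sq[of "-1" t] by (simp add: field_simps)
  qed
  from inv_cbinom_series_closed_form[of "-1", OF _ _ this assms] show ?thesis by simp
qed

lemma arcsin_eq_arccot:
  assumes "x > 1/4"
  shows "arcsin (1 / (2 * sqrt x)) = arccot (sqrt (4 * x - 1))"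
proof -
  define q v where "q = sqrt x" and "v = sqrt (4 * x - 1)"
  have q: "q > 1/2" "x = q\<^sup>2" and v: "v > 0" "v\<^sup>2 = 4 * x - 1"
    using assms real_less_rsqrt[of "1/2" x] unfolding q_def v_def by (auto simp: power_divide)
  have "1 - (1 / (2 * q))\<^sup>2 = (v / (2 * q))\<^sup>2"
    using q v by (simp add: field_simps)
  then have "sqrt (1 - (1 / (2 * q))\<^sup>2) = v / (2 * q)" using q v by simp
  moreover have "-1 < 1 / (2 * q)" "1 / (2 * q) < 1" using q by (auto simp: field_simps)
  ultimately show ?thesis
    unfolding q_def[symmetric] v_def[symmetric] arccot_def using q v by (simp add: arcsin_arctan)
qed

lemma arsinh_eq_R:
  assumes "x > 0"
  shows "sqrt (4 * x + 1) * arsinh (1 / (2 * sqrt x)) = R (4 * x + 1)"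
proof -
  define q u where "q = sqrt x" and "u = sqrt (4 * x + 1)"
  have q: "q > 0" "x = q\<^sup>2" and u: "u > 1" "u\<^sup>2 = 4 * x + 1"
    using assms real_less_rsqrt[of 1 "4 * x + 1"] unfolding q_def u_def by auto
  have "(1 / (2 * q))\<^sup>2 + 1 = (u / (2 * q))\<^sup>2"
    using q u by (simp add: field_simps)
  then have "sqrt ((1 / (2 * q))\<^sup>2 + 1) = u / (2 * q)" using q u by simp
  then have "arsinh (1 / (2 * q)) = ln ((u + 1) / (2 * q))"
    by (simp add: arsinh_real_def add_divide_distrib add.commute)
  also have "\<dots> = ln (((u + 1) / (2 * q))\<^sup>2) / 2"
    using q u by (simp add: ln_realpow)
  also have "((u + 1) / (2 * q))\<^sup>2 = (u + 1) / (u - 1)"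
    using q u by (simp add: field_simps power2_eq_square)
  finally show ?thesis
    unfolding R_def u_def[symmetric] q_def[symmetric] using u assms by simp
qed

lemma inv_cbinom_series_inverse:
  assumes x: "x > 1/4"
  shows "inv_cbinom_series (1 / x) =
           4 * x / (4 * x - 1) + 4 * x * arccot (sqrt (4 * x - 1)) / sqrt (4 * x - 1) ^ 3"
proof -
  define q v where "q = sqrt x" and "v = sqrt (4 * x - 1)"
  have q: "q > 1/2" "x = q\<^sup>2" and v: "v > 0" "v\<^sup>2 = 4 * x - 1"
    using x real_less_rsqrt[of "1/2" x] unfolding q_def v_def by (auto simp: power_divide)
  have "(1 / q)\<^sup>2 = 1 / x" "4 - (1 / q)\<^sup>2 = (v / q)\<^sup>2"
    using q v by (simp_all add: field_simps)
  moreover have "sqrt ((v / q)\<^sup>2) = v / q" using q v by simp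
  moreover have "arcsin (1 / q / 2) = arccot v"
    using arcsin_eq_arccot[OF x] unfolding q_def v_def by (simp add: mult.commute)
  moreover have "0 < 1 / q" "1 / q < 2" using q by (auto simp: field_simps)
  ultimately have "inv_cbinom_series (1 / x) = 4 / (v / q)\<^sup>2 + 4 * (1 / q) * arccot v / ((v / q)\<^sup>2 * (v / q))"
    using inv_cbinom_series_sq[of "1 / q"] by simp
  also have "\<dots> = 4 * x / v\<^sup>2 + 4 * x * arccot v / v ^ 3"
    using q v by (simp add: field_simps power2_eq_square power3_eq_cube)
  finally show ?thesis unfolding v(2) unfolding v_def .
qed

lemma inv_cbinom_series_neg_inverse:
  assumes x: "x > 1/4"
  shows "inv_cbinom_series (- 1 / x) = 4 * x / (4 * x + 1) - 4 * x * R (4 * x + 1) / (4 * x + 1)\<^sup>2"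
proof -
  define q u where "q = sqrt x" and "u = sqrt (4 * x + 1)"
  have q: "q > 1/2" "x = q\<^sup>2" and u: "u > 0" "u\<^sup>2 = 4 * x + 1"
    using x real_less_rsqrt[of "1/2" x] unfolding q_def u_def by (auto simp: power_divide)
  have "- (1 / q)\<^sup>2 = - 1 / x" "4 + (1 / q)\<^sup>2 = (u / q)\<^sup>2"
    using q u by (simp_all add: field_simps)
  moreover have "sqrt ((u / q)\<^sup>2) = u / q" using q u by simp
  moreover have "arsinh (1 / q / 2) = R (4 * x + 1) / u"
    using arsinh_eq_R[of x] x u unfolding q_def u_def by (simp add: field_simps)
  moreover have "0 < 1 / q" "1 / q < 2" using q by (auto simp: field_simps)
  ultimately have "inv_cbinom_series (- 1 / x) =
      4 / (u / q)\<^sup>2 - 4 * (1 / q) * (R (4 * x + 1) / u) / ((u / q)\<^sup>2 * (u / q))"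
    using inv_cbinom_series_neg_sq[of "1 / q"] by simp
  also have "\<dots> = 4 * q\<^sup>2 / u\<^sup>2 - 4 * q\<^sup>2 * R (4 * x + 1) / (u\<^sup>2)\<^sup>2"
    using q(1) u(1) by (simp add: field_simps power2_eq_square)
  finally show ?thesis unfolding u(2) q(2)[symmetric] .
qed

lemma sums_even_part:
  fixes f :: "nat \<Rightarrow> real"
  assumes "f sums A" "(\<lambda>n. (-1) ^ n * f n) sums B"
  shows "(\<lambda>k. f (2 * k)) sums ((A + B) / 2)"
proof -
  define g where "g n = (f n + (-1) ^ n * f n) / 2" for n
  have "g sums ((A + B) / 2)" unfolding g_def by (intro sums_divide sums_add assms)
  then have "(\<lambda>k. sum g {k * 2..<k * 2 + 2}) sums ((A + B) / 2)" by (rule sums_group) simp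
  moreover have "sum g {k * 2..<k * 2 + 2} = f (2 * k)" for k
  proof -
    have "{k * 2..<k * 2 + 2} = {2 * k, Suc (2 * k)}" by auto
    then show ?thesis by (simp add: g_def)
  qed
  ultimately show ?thesis by simp
qed

lemma sums_even_affine_inv_cbinom:
  fixes x c d :: real
  assumes x: "x > 1/4"
  defines "F \<equiv> inv_cbinom_series"
  shows "(\<lambda>k. (2 * c * real k + d) / (x ^ (2 * k) * real ((4 * k) choose (2 * k)))) sums
           ((c * ((1 + 2 * x) * F (1 / x) - 2 * x) / (4 * x - 1) + d * F (1 / x)
             + (c * ((2 * x - 1) * F (- 1 / x) - 2 * x) / (4 * x + 1) + d * F (- 1 / x))) / 2)"
proof -
  define f where "f n = (c * real n + d) * inv_cbinom n * (1 / x) ^ n" for n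
  have w: "\<bar>1 / x\<bar> < 4" "\<bar>- 1 / x\<bar> < 4" using x by (auto simp: field_simps)
  have "f sums (c * ((1 / x + 2) * F (1 / x) - 2) / (4 - 1 / x) + d * F (1 / x))"
    (is "_ sums ?A")
    unfolding f_def F_def by (rule sums_affine_inv_cbinom[OF w(1)])
  moreover have "(\<lambda>n. (-1) ^ n * f n) sums
      (c * ((- 1 / x + 2) * F (- 1 / x) - 2) / (4 - - 1 / x) + d * F (- 1 / x))"
    (is "_ sums ?B")
    using sums_affine_inv_cbinom[OF w(2), of c d] unfolding f_def F_def
    by (simp add: power_minus' mult_ac)
  ultimately have "(\<lambda>k. f (2 * k)) sums ((?A + ?B) / 2)" by (rule sums_even_part)
  moreover have "f (2 * k) = (2 * c * real k + d) / (x ^ (2 * k) * real ((4 * k) choose (2 * k)))" for k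
    unfolding f_def inv_cbinom_def by (simp add: power_one_over mult_ac)
  moreover have "(1 / x + 2) * F (1 / x) - 2 = ((1 + 2 * x) * F (1 / x) - 2 * x) / x"
    "4 - 1 / x = (4 * x - 1) / x"
    "(- 1 / x + 2) * F (- 1 / x) - 2 = ((2 * x - 1) * F (- 1 / x) - 2 * x) / x"
    "4 - - 1 / x = (4 * x + 1) / x"
    using x by (simp_all add: field_simps)
  ultimately show ?thesis using x by simp
qed

lemma sums_inv_cbinom_arccot:
  assumes x: "x > 1/4"
  shows "(\<lambda>k. (2 * (4 * x + 1) * real k - 2 * x + 1) / (x ^ (2 * k) * real ((4 * k) choose (2 * k))))
           sums (8 * x\<^sup>2 / (4 * x - 1)\<^sup>2 * (3 / sqrt (4 * x - 1) * arccot (sqrt (4 * x - 1)) - 4 * x + 4))"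
proof -
  define F G where "F = inv_cbinom_series (1 / x)" and "G = inv_cbinom_series (- 1 / x)"
  define v where "v = sqrt (4 * x - 1)"
  have v: "v > 0" "v ^ 3 = (4 * x - 1) * v" using x unfolding v_def by (simp_all add: power3_eq_cube)
  have "4 * x + 1 \<noteq> 0" using x by simp
  then have "(4 * x + 1) * ((2 * x - 1) * G - 2 * x) / (4 * x + 1) + (1 - 2 * x) * G = - 2 * x"
    unfolding nonzero_mult_div_cancel_left[OF \<open>4 * x + 1 \<noteq> 0\<close>] by (simp add: algebra_simps)
  then have "((4 * x + 1) * ((1 + 2 * x) * F - 2 * x) / (4 * x - 1) + (1 - 2 * x) * F
      + ((4 * x + 1) * ((2 * x - 1) * G - 2 * x) / (4 * x + 1) + (1 - 2 * x) * G)) / 2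
      = (6 * x * F - 8 * x\<^sup>2) / (4 * x - 1)" (is "?sum = _")
    using x by (simp add: divide_simps) (simp add: algebra_simps power2_eq_square)
  also have "\<dots> = 8 * x\<^sup>2 / (4 * x - 1)\<^sup>2 * (3 / v * arccot v - 4 * x + 4)"
    unfolding F_def inv_cbinom_series_inverse[OF x] v_def[symmetric] v(2)
    using x v(1) by (simp add: divide_simps) (simp add: algebra_simps power2_eq_square)
  finally have sum_eq: "?sum = 8 * x\<^sup>2 / (4 * x - 1)\<^sup>2 * (3 / v * arccot v - 4 * x + 4)" .
  show ?thesis
    using sums_even_affine_inv_cbinom[OF x, of "4 * x + 1" "1 - 2 * x"]
    unfolding F_def[symmetric] G_def[symmetric] sum_eq v_def by (simp add: algebra_simps)
qed

lemma sums_inv_cbinom_R: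
  assumes x: "x > 1/4"
  shows "(\<lambda>k. (2 * (4 * x - 1) * real k - 2 * x - 1) / (x ^ (2 * k) * real ((4 * k) choose (2 * k))))
           sums (8 * x\<^sup>2 / (4 * x + 1)\<^sup>2 * (3 * R (4 * x + 1) / (4 * x + 1) - 4 * x - 4))"
proof -
  define F G where "F = inv_cbinom_series (1 / x)" and "G = inv_cbinom_series (- 1 / x)"
  have "4 * x - 1 \<noteq> 0" using x by simp
  then have "(4 * x - 1) * ((1 + 2 * x) * F - 2 * x) / (4 * x - 1) + (- 2 * x - 1) * F = - 2 * x"
    unfolding nonzero_mult_div_cancel_left[OF \<open>4 * x - 1 \<noteq> 0\<close>] by (simp add: algebra_simps)
  then have "((4 * x - 1) * ((1 + 2 * x) * F - 2 * x) / (4 * x - 1) + (- 2 * x - 1) * F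
      + ((4 * x - 1) * ((2 * x - 1) * G - 2 * x) / (4 * x + 1) + (- 2 * x - 1) * G)) / 2
      = (- 6 * x * G - 8 * x\<^sup>2) / (4 * x + 1)" (is "?sum = _")
    using x by (simp add: divide_simps) (simp add: algebra_simps power2_eq_square)
  also have "\<dots> = 8 * x\<^sup>2 / (4 * x + 1)\<^sup>2 * (3 * R (4 * x + 1) / (4 * x + 1) - 4 * x - 4)"
    unfolding G_def inv_cbinom_series_neg_inverse[OF x]
    using x by (simp add: divide_simps) (simp add: algebra_simps power2_eq_square)
  finally have sum_eq: "?sum = 8 * x\<^sup>2 / (4 * x + 1)\<^sup>2 * (3 * R (4 * x + 1) / (4 * x + 1) - 4 * x - 4)" .
  show ?thesis
    using sums_even_affine_inv_cbinom[OF x, of "4 * x - 1" "- 2 * x - 1"]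
    unfolding F_def[symmetric] G_def[symmetric] sum_eq by (simp add: algebra_simps)
qed

lemma sums_inv_cbinom_at_1:
  "(\<lambda>k::nat. (10 * real k - 1) / real ((4 * k) choose (2 * k))) sums (4 * sqrt 3 / 27 * pi)"
proof -
  have "arccot (sqrt 3) = pi / 6"
    unfolding arccot_def using arctan_tan[of "pi / 6"] tan_30 by simp
  moreover have "sqrt 3 * sqrt 3 = (3::real)" by simp
  ultimately have val: "8 * 1\<^sup>2 / (4 * 1 - 1)\<^sup>2 * (3 / sqrt (4 * 1 - 1) * arccot (sqrt (4 * 1 - 1))
      - 4 * 1 + 4) = 4 * sqrt 3 / 27 * pi"
    by (simp add: field_simps)
  show ?thesis using sums_inv_cbinom_arccot[of 1] unfolding val by simp
qed

lemma sums_inv_cbinom_at_half: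
  "(\<lambda>k::nat. real k * 4 ^ k / real ((4 * k) choose (2 * k))) sums ((3 * pi + 8) / 12)"
proof -
  have val: "8 * (1 / 2)\<^sup>2 / (4 * (1 / 2) - 1)\<^sup>2 * (3 / sqrt (4 * (1 / 2) - 1)
      * arccot (sqrt (4 * (1 / 2) - 1)) - 4 * (1 / 2) + 4) / 6 = (3 * pi + 8) / 12"
    by (simp add: arccot_def arctan_one field_simps)
  have term_eq: "(2 * (4 * (1 / 2) + 1) * real k - 2 * (1 / 2) + 1)
      / ((1 / 2) ^ (2 * k) * real ((4 * k) choose (2 * k))) / 6
      = real k * 4 ^ k / real ((4 * k) choose (2 * k))" for k
    by (simp add: power_mult power_divide)
  show ?thesis using sums_divide[OF sums_inv_cbinom_arccot[of "1 / 2"], of 6] unfolding val term_eq by simp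
qed

lemma sums_inv_cbinom_at_third:
  "(\<lambda>k::nat. (14 * real k + 1) * 9 ^ k / real ((4 * k) choose (2 * k))) sums (24 * pi * sqrt 3 + 64)"
proof -
  have "arccot (1 / sqrt 3) = pi / 3"
    unfolding arccot_def using arctan_tan[of "pi / 3"] tan_60 by simp
  moreover have "sqrt 3 * sqrt 3 = (3::real)" by simp
  ultimately have val: "3 * (8 * (1 / 3)\<^sup>2 / (4 * (1 / 3) - 1)\<^sup>2 * (3 / sqrt (4 * (1 / 3) - 1)
      * arccot (sqrt (4 * (1 / 3) - 1)) - 4 * (1 / 3) + 4)) = 24 * pi * sqrt 3 + 64"
    by (simp add: real_sqrt_divide field_simps)
  have pow: "(1 / 3 :: real) ^ (2 * k) = 1 / 9 ^ k" for k by (simp add: power_mult power_divide)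
  have term_eq: "3 * ((2 * (4 * (1 / 3) + 1) * real k - 2 * (1 / 3) + 1)
      / ((1 / 3) ^ (2 * k) * real ((4 * k) choose (2 * k))))
      = (14 * real k + 1) * 9 ^ k / real ((4 * k) choose (2 * k))" for k
    unfolding pow by (simp add: field_simps)
  show ?thesis using sums_mult[OF sums_inv_cbinom_arccot[of "1 / 3"], of 3] unfolding val term_eq by simp
qed

lemma sums_inv_cbinom_at_two_thirds:
  "(\<lambda>k::nat. (22 * real k - 1) * 9 ^ k / (4 ^ k * real ((4 * k) choose (2 * k))))
     sums (32 / 25 * (4 + 27 / sqrt 15 * arctan (sqrt (3 / 5))))"
proof -
  have "sqrt 15 = sqrt 3 * sqrt (5 :: real)" by (simp flip: real_sqrt_mult)
  then have "27 / sqrt 15 = 9 * sqrt (3 / 5 :: real)"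
    by (simp add: real_sqrt_divide field_simps)
  moreover have "4 * (2 / 3) - 1 = (5 / 3 :: real)" "1 / sqrt (5 / 3) = sqrt (3 / 5 :: real)"
    "3 / sqrt (5 / 3) = 3 * sqrt (3 / 5 :: real)"
    by (simp_all add: real_sqrt_divide)
  ultimately have val: "3 * (8 * (2 / 3)\<^sup>2 / (4 * (2 / 3) - 1)\<^sup>2 * (3 / sqrt (4 * (2 / 3) - 1)
      * arccot (sqrt (4 * (2 / 3) - 1)) - 4 * (2 / 3) + 4))
      = 32 / 25 * (4 + 27 / sqrt 15 * arctan (sqrt (3 / 5)))"
    unfolding arccot_def by (simp only:) (simp add: field_simps)
  have pow: "(2 / 3 :: real) ^ (2 * k) = 4 ^ k / 9 ^ k" for k by (simp add: power_mult power_divide)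
  have term_eq: "3 * ((2 * (4 * (2 / 3) + 1) * real k - 2 * (2 / 3) + 1)
      / ((2 / 3) ^ (2 * k) * real ((4 * k) choose (2 * k))))
      = (22 * real k - 1) * 9 ^ k / (4 ^ k * real ((4 * k) choose (2 * k)))" for k
    unfolding pow by (simp add: field_simps)
  show ?thesis using sums_mult[OF sums_inv_cbinom_arccot[of "2 / 3"], of 3] unfolding val term_eq by simp
qed

lemma sums_inv_cbinom_R_at_2:
  "(\<lambda>k::nat. (14 * real k - 5) / (4 ^ k * real ((4 * k) choose (2 * k)))) sums (16 / 81 * (ln 2 - 24))"
proof -
  have "sqrt 9 = (3 :: real)" by (simp add: real_sqrt_eq_iff)
  then have "R 9 = 3 / 2 * ln 2" unfolding R_def by simp
  then have val: "8 * 2\<^sup>2 / (4 * 2 + 1)\<^sup>2 * (3 * R (4 * 2 + 1) / (4 * 2 + 1) - 4 * 2 - 4)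
      = 16 / 81 * (ln 2 - 24)"
    by simp
  have term_eq: "(2 * (4 * 2 - 1) * real k - 2 * 2 - 1) / (2 ^ (2 * k) * real ((4 * k) choose (2 * k)))
      = (14 * real k - 5) / (4 ^ k * real ((4 * k) choose (2 * k)))" for k
    by (simp add: power_mult)
  show ?thesis using sums_inv_cbinom_R[of 2] unfolding val term_eq by simp
qed

theorem theorem1p2:
  shows "(\<forall>x::real. x > 1/4 \<longrightarrow>
      ((\<lambda>k::nat. (2*(4*x+1)*real k - 2*x + 1) / (x^(2*k) * real ((4*k) choose (2*k))))
        sums (8*x^2/(4*x-1)^2 * (3 / sqrt (4*x-1) * arccot (sqrt (4*x-1)) - 4*x + 4)))
    \<and> ((\<lambda>k::nat. (2*(4*x-1)*real k - 2*x - 1) / (x^(2*k) * real ((4*k) choose (2*k))))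
        sums (8*x^2/(4*x+1)^2 * (3 * R (4*x+1) / (4*x+1) - 4*x - 4))))
    \<and> ((\<lambda>k::nat. (10*real k - 1) / real ((4*k) choose (2*k))) sums (4*sqrt 3/27*pi))
    \<and> ((\<lambda>k::nat. real k * 4^k / real ((4*k) choose (2*k))) sums ((3*pi+8)/12))
    \<and> ((\<lambda>k::nat. (14*real k + 1) * 9^k / real ((4*k) choose (2*k))) sums (24*pi*sqrt 3 + 64))
    \<and> ((\<lambda>k::nat. (22*real k - 1) * 9^k / (4^k * real ((4*k) choose (2*k))))
        sums (32/25 * (4 + 27 / sqrt 15 * arctan (sqrt (3/5)))))
    \<and> ((\<lambda>k::nat. (14*real k - 5) / (4^k * real ((4*k) choose (2*k))))
        sums (16/81 * (ln 2 - 24)))"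
  by (intro conjI allI impI sums_inv_cbinom_arccot sums_inv_cbinom_R sums_inv_cbinom_at_1
      sums_inv_cbinom_at_half sums_inv_cbinom_at_third sums_inv_cbinom_at_two_thirds
      sums_inv_cbinom_R_at_2)

end
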